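(* For $\alpha_1,\alpha_2\in\mathbb C$ let $K_2(\alpha_1,\alpha_2)$ be the complex Leibniz algebra with basis $\{l,p_+,p_-,X_1,X_2,X_3\}$ whose only nonzero products are $[l,p_+]=p_+$, $[p_+,l]=-p_+$, $[l,p_-]=-p_-$, $[p_-,l]=p_-$, $[l,l]=\alpha_1X_3$, $[p_+,p_-]=\alpha_2X_3$, $[p_-,p_+]=-\alpha_2X_3$, $[X_1,p_-]=-X_3$, $[X_1,l]=-X_1$, $[X_2,p_+]=X_3$, $[X_2,l]=X_2$. Then every algebra $K_2(\alpha_1,\alpha_2)$ is isomorphic to one of $K_2(1,1)$, $K_2(1,0)$, $K_2(0,1)$, $K_2(0,0)$, and these four algebras are pairwise non-isomorphic.
   Context: A (right) Leibniz algebra is a vector space with a bilinear bracket satisfying $[[x,y],z]=[[x,z],y]+[x,[y,z]]$. *)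

theory Defs
  imports Complex_Main "HOL-Library.Numeral_Type"
begin

text \<open>Vectors of the 6-dimensional complex space, coordinates indexed by the finite
type 6. Basis index convention: 0 = l, 1 = p_+, 2 = p_-, 3 = X_1, 4 = X_2, 5 = X_3.\<close>

type_synonym vec6 = "6 \<Rightarrow> complex"

definition ebas :: "6 \<Rightarrow> vec6" where
  "ebas i = (\<lambda>k. if k = i then 1 else 0)"

definition K2_bb :: "complex \<Rightarrow> complex \<Rightarrow> 6 \<Rightarrow> 6 \<Rightarrow> vec6" where
  "K2_bb a1 a2 i j =
     (if i = 0 \<and> j = 1 then ebas 1
      else if i = 1 \<and> j = 0 then (\<lambda>k. - ebas 1 k)
      else if i = 0 \<and> j = 2 then (\<lambda>k. - ebas 2 k)
      else if i = 2 \<and> j = 0 then ebas 2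
      else if i = 0 \<and> j = 0 then (\<lambda>k. a1 * ebas 5 k)
      else if i = 1 \<and> j = 2 then (\<lambda>k. a2 * ebas 5 k)
      else if i = 2 \<and> j = 1 then (\<lambda>k. - a2 * ebas 5 k)
      else if i = 3 \<and> j = 2 then (\<lambda>k. - ebas 5 k)
      else if i = 3 \<and> j = 0 then (\<lambda>k. - ebas 3 k)
      else if i = 4 \<and> j = 1 then ebas 5
      else if i = 4 \<and> j = 0 then ebas 4
      else (\<lambda>k. 0))"

definition K2_br :: "complex \<Rightarrow> complex \<Rightarrow> vec6 \<Rightarrow> vec6 \<Rightarrow> vec6" where
  "K2_br a1 a2 u v = (\<lambda>k. \<Sum>i\<in>UNIV. \<Sum>j\<in>UNIV. u i * v j * K2_bb a1 a2 i j k)"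

text \<open>The linear map with matrix A (A i k = k-th coordinate of the image of basis vector i).\<close>
definition linmap :: "(6 \<Rightarrow> 6 \<Rightarrow> complex) \<Rightarrow> vec6 \<Rightarrow> vec6" where
  "linmap A v = (\<lambda>k. \<Sum>i\<in>UNIV. v i * A i k)"

definition K2_isomorphic :: "complex \<times> complex \<Rightarrow> complex \<times> complex \<Rightarrow> bool" where
  "K2_isomorphic a b =
     (\<exists>A B. (\<forall>v. linmap B (linmap A v) = v) \<and> (\<forall>v. linmap A (linmap B v) = v) \<and>
        (\<forall>u v. linmap A (K2_br (fst a) (snd a) u v)
               = K2_br (fst b) (snd b) (linmap A u) (linmap A v)))"

end

theory Submission imports Defs begin

text \<open>The first coordinate of every bracket vanishes, while every basis vector other than \<open>l\<close>
  is itself a bracket. Hence an isomorphism \<open>K\<^sub>2(\<alpha>\<^sub>1,\<alpha>\<^sub>2) \<rightarrow> K\<^sub>2(\<beta>\<^sub>1,\<beta>\<^sub>2)\<close> sends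
  \<open>l\<close> to \<open>\<lambda> l + \<dots>\<close> with \<open>\<lambda> \<noteq> 0\<close>, and \<open>X\<^sub>3\<close>, which brackets trivially with \<open>l\<close> on both sides,
  to \<open>\<mu> X\<^sub>3\<close> with \<open>\<mu> \<noteq> 0\<close>. Comparing the \<open>X\<^sub>3\<close>-coordinates of the images of \<open>[l,l]\<close> and
  \<open>[p\<^sub>+,p\<^sub>-]\<close> gives \<open>\<alpha>\<^sub>1 \<mu> = \<beta>\<^sub>1 \<lambda>\<^sup>2\<close> and \<open>\<alpha>\<^sub>2 \<mu> = \<beta>\<^sub>2 \<delta>\<close>, where \<open>\<delta>\<close> is a \<open>2\<times>2\<close> minor; so
  the vanishing of each parameter is an invariant. Conversely, rescaling
  \<open>p\<^sub>+, p\<^sub>-, X\<^sub>1, X\<^sub>2, X\<^sub>3\<close> independently multiplies \<open>\<alpha>\<^sub>1\<close> and \<open>\<alpha>\<^sub>2\<close> by independent nonzero factors,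
  which normalises every nonzero parameter to \<open>1\<close>.\<close>

lemma exhaust_6: "(x::6) = 0 \<or> x = 1 \<or> x = 2 \<or> x = 3 \<or> x = 4 \<or> x = 5"
proof (induct x rule: bit0_induct)
  case (of_int z)
  then have "z = 0 \<or> z = 1 \<or> z = 2 \<or> z = 3 \<or> z = 4 \<or> z = 5" by auto
  then show ?case by auto
qed

lemma UNIV_6: "(UNIV::6 set) = {0,1,2,3,4,5}"
  using exhaust_6 by blast

lemma sum_UNIV_6: "(\<Sum>i\<in>(UNIV::6 set). f i) = f 0 + f 1 + f 2 + f 3 + f 4 + f 5"
  unfolding UNIV_6 by (simp add: ac_simps)

lemma K2_br_coordinates:
  "K2_br a1 a2 u v 0 = 0"
  "K2_br a1 a2 u v 1 = u 0 * v 1 - u 1 * v 0"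
  "K2_br a1 a2 u v 2 = u 2 * v 0 - u 0 * v 2"
  "K2_br a1 a2 u v 3 = - (u 3 * v 0)"
  "K2_br a1 a2 u v 4 = u 4 * v 0"
  "K2_br a1 a2 u v 5 = a1 * u 0 * v 0 + a2 * (u 1 * v 2 - u 2 * v 1) - u 3 * v 2 + u 4 * v 1"
  unfolding K2_br_def sum_UNIV_6 K2_bb_def ebas_def
  by (simp_all add: algebra_simps)

lemma sum_ebas_mult: "(\<Sum>k\<in>UNIV. ebas i k * f k) = f i"
  unfolding ebas_def by (simp add: if_distrib[of "\<lambda>x. x * _"] cong: if_cong)

lemma K2_br_ebas: "K2_br a1 a2 (ebas i) (ebas j) = K2_bb a1 a2 i j"
  unfolding K2_br_def by (simp add: fun_eq_iff mult.assoc sum_distrib_left[symmetric] sum_ebas_mult)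

lemma linmap_apply:
  "linmap A v k = v 0 * A 0 k + v 1 * A 1 k + v 2 * A 2 k + v 3 * A 3 k + v 4 * A 4 k + v 5 * A 5 k"
  unfolding linmap_def sum_UNIV_6 ..

lemma linmap_scale: "linmap A (\<lambda>k. c * v k) = (\<lambda>k. c * linmap A v k)"
  unfolding linmap_def by (simp add: sum_distrib_left mult.assoc)

lemma linmap_uminus: "linmap A (\<lambda>k. - v k) = (\<lambda>k. - linmap A v k)"
  unfolding linmap_def by (simp add: sum_negf)

lemma linmap_ebas: "linmap A (ebas i) = A i"
  unfolding linmap_def by (simp add: sum_ebas_mult)

lemma linmap_diagonal: "linmap (\<lambda>i k. if i = k then d k else 0) v = (\<lambda>k. v k * d k)"
  unfolding linmap_def by (simp add: fun_eq_iff if_distrib[of "\<lambda>x. _ * x"] cong: if_cong)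

lemma K2_hom_ebas:
  assumes "\<forall>u v. linmap A (K2_br a1 a2 u v) = K2_br b1 b2 (linmap A u) (linmap A v)"
  shows "linmap A (K2_bb a1 a2 i j) = K2_br b1 b2 (A i) (A j)"
  using assms[rule_format, of "ebas i" "ebas j"] by (simp add: K2_br_ebas linmap_ebas)

lemma K2_hom_coordinate_0:
  assumes hom: "\<forall>u v. linmap A (K2_br a1 a2 u v) = K2_br b1 b2 (linmap A u) (linmap A v)"
    and "i \<noteq> 0"
  shows "A i 0 = 0"
proof -
  have "K2_bb a1 a2 0 1 = ebas 1" "K2_bb a1 a2 2 0 = ebas 2" "K2_bb a1 a2 3 0 = (\<lambda>k. - ebas 3 k)"
    "K2_bb a1 a2 4 0 = ebas 4" "K2_bb a1 a2 4 1 = ebas 5"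
    by (simp_all add: K2_bb_def)
  moreover have "linmap A (K2_bb a1 a2 i j) 0 = 0" for i j
    using K2_hom_ebas[OF hom] by (simp add: K2_br_coordinates)
  ultimately have "A 1 0 = 0" "A 2 0 = 0" "- A 3 0 = 0" "A 4 0 = 0" "A 5 0 = 0"
    by (metis linmap_ebas linmap_uminus)+
  then show ?thesis
    using exhaust_6[of i] \<open>i \<noteq> 0\<close> by auto
qed

lemma K2_iso_matrix_relations:
  assumes AB: "\<forall>v. linmap A (linmap B v) = v" and BA: "\<forall>v. linmap B (linmap A v) = v"
    and hom: "\<forall>u v. linmap A (K2_br a1 a2 u v) = K2_br b1 b2 (linmap A u) (linmap A v)"
  shows "A 0 0 \<noteq> 0" "A 5 5 \<noteq> 0"
    "a1 * A 5 5 = b1 * A 0 0 * A 0 0"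
    "a2 * A 5 5 = b2 * (A 1 1 * A 2 2 - A 1 2 * A 2 1)"
proof -
  have col0: "A i 0 = 0" if "i \<noteq> 0" for i
    using K2_hom_coordinate_0[OF hom that] .
  have "linmap A w 0 = w 0 * A 0 0" for w
    by (simp add: linmap_apply col0)
  moreover have "linmap A (linmap B (ebas 0)) 0 = 1"
    using AB by (simp add: ebas_def)
  ultimately show A00: "A 0 0 \<noteq> 0" by auto
  have bb: "K2_bb a1 a2 0 1 = ebas 1" "K2_bb a1 a2 0 0 = (\<lambda>k. a1 * ebas 5 k)"
    "K2_bb a1 a2 1 2 = (\<lambda>k. a2 * ebas 5 k)"
    "K2_bb a1 a2 0 5 = (\<lambda>k. 0 * ebas 5 k)" "K2_bb a1 a2 5 0 = (\<lambda>k. 0 * ebas 5 k)"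
    by (simp_all add: K2_bb_def fun_eq_iff)
  have hom01: "A 1 = K2_br b1 b2 (A 0) (A 1)"
    using K2_hom_ebas[OF hom, of 0 1] unfolding bb linmap_ebas .
  have hom00: "(\<lambda>k. a1 * A 5 k) = K2_br b1 b2 (A 0) (A 0)"
    using K2_hom_ebas[OF hom, of 0 0] unfolding bb linmap_ebas linmap_scale .
  have hom12: "(\<lambda>k. a2 * A 5 k) = K2_br b1 b2 (A 1) (A 2)"
    using K2_hom_ebas[OF hom, of 1 2] unfolding bb linmap_ebas linmap_scale .
  have hom05: "(\<lambda>k. 0) = K2_br b1 b2 (A 0) (A 5)"
    using K2_hom_ebas[OF hom, of 0 5] unfolding bb linmap_scale by simp
  have hom50: "(\<lambda>k. 0) = K2_br b1 b2 (A 5) (A 0)"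
    using K2_hom_ebas[OF hom, of 5 0] unfolding bb linmap_scale by simp
  have A5_axis: "A 5 k = 0" if "k \<noteq> 5" for k
  proof -
    have "A 5 1 = 0" "A 5 2 = 0"
      using fun_cong[OF hom05, of 1] fun_cong[OF hom05, of 2] A00 col0[of 5]
      by (simp_all add: K2_br_coordinates)
    moreover have "A 5 3 = 0" "A 5 4 = 0"
      using fun_cong[OF hom50, of 3] fun_cong[OF hom50, of 4] A00
      by (simp_all add: K2_br_coordinates)
    ultimately show ?thesis
      using col0[of 5] exhaust_6[of k] that by auto
  qed
  show A55: "A 5 5 \<noteq> 0"
  proof
    assume "A 5 5 = 0"
    then have "A 5 = (\<lambda>k. 0)"
      using A5_axis by (metis ext)
    then have "linmap A (ebas 5) = linmap A (\<lambda>k. 0 * ebas 5 k)"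
      unfolding linmap_ebas linmap_scale by simp
    then have "ebas 5 = (\<lambda>k. 0 * ebas 5 k)"
      using BA by metis
    then have "ebas 5 5 = 0" by simp
    then show False by (simp add: ebas_def)
  qed
  have "A 0 3 = 0" "A 0 4 = 0"
    using fun_cong[OF hom00, of 3] fun_cong[OF hom00, of 4] A00
    by (simp_all add: K2_br_coordinates A5_axis)
  then show "a1 * A 5 5 = b1 * A 0 0 * A 0 0"
    using fun_cong[OF hom00, of 5] by (simp add: K2_br_coordinates)
  have "A 1 3 = 0" "A 1 4 = 0"
    using fun_cong[OF hom01, of 3] fun_cong[OF hom01, of 4] by (simp_all add: K2_br_coordinates col0)
  then show "a2 * A 5 5 = b2 * (A 1 1 * A 2 2 - A 1 2 * A 2 1)"
    using fun_cong[OF hom12, of 5] by (simp add: K2_br_coordinates col0)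
qed

lemma K2_isomorphic_sym:
  assumes "K2_isomorphic a b" shows "K2_isomorphic b a"
proof -
  obtain A B where AB: "\<forall>v. linmap A (linmap B v) = v" and BA: "\<forall>v. linmap B (linmap A v) = v"
    and hom: "\<forall>u v. linmap A (K2_br (fst a) (snd a) u v) = K2_br (fst b) (snd b) (linmap A u) (linmap A v)"
    using assms unfolding K2_isomorphic_def by blast
  have "linmap B (K2_br (fst b) (snd b) u v) = K2_br (fst a) (snd a) (linmap B u) (linmap B v)" for u v
  proof -
    have "K2_br (fst b) (snd b) u v = linmap A (K2_br (fst a) (snd a) (linmap B u) (linmap B v))"
      using hom AB by simp
    then show ?thesis using BA by simp
  qed
  then show ?thesis
    unfolding K2_isomorphic_def using AB BA by blast
qed

lemma K2_isomorphic_zero_pattern: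
  assumes "K2_isomorphic (a1, a2) (b1, b2)"
  shows "a1 = 0 \<longleftrightarrow> b1 = 0" and "b2 = 0 \<Longrightarrow> a2 = 0"
proof -
  obtain A B where "\<forall>v. linmap A (linmap B v) = v" "\<forall>v. linmap B (linmap A v) = v"
    "\<forall>u v. linmap A (K2_br a1 a2 u v) = K2_br b1 b2 (linmap A u) (linmap A v)"
    using assms unfolding K2_isomorphic_def by auto
  note rel = K2_iso_matrix_relations[OF this]
  show "a1 = 0 \<longleftrightarrow> b1 = 0" using rel(1-3) by auto
  show "b2 = 0 \<Longrightarrow> a2 = 0" using rel(2,4) by auto
qed

lemma K2_isomorphic_same_zero_pattern:
  assumes "K2_isomorphic (a1, a2) (b1, b2)"
  shows "(a1 = 0 \<longleftrightarrow> b1 = 0) \<and> (a2 = 0 \<longleftrightarrow> b2 = 0)"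
  using K2_isomorphic_zero_pattern[OF assms] K2_isomorphic_zero_pattern[OF K2_isomorphic_sym[OF assms]]
  by blast

lemma K2_isomorphic_rescale:
  fixes s t x y c :: complex
  assumes nonzero: "s \<noteq> 0" "t \<noteq> 0" "x \<noteq> 0" "y \<noteq> 0" "c \<noteq> 0"
    and rel: "c * a1 = b1" "c * a2 = b2 * s * t" "c = x * t" "c = y * s"
  shows "K2_isomorphic (a1, a2) (b1, b2)"
proof -
  define d :: vec6 where "d = (\<lambda>k. if k = 0 then 1 else if k = 1 then s else if k = 2 then t
     else if k = 3 then x else if k = 4 then y else c)"
  have d: "d 0 = 1" "d 1 = s" "d 2 = t" "d 3 = x" "d 4 = y" "d 5 = c"
    unfolding d_def by simp_all
  have d_nonzero: "d k \<noteq> 0" for k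
    using exhaust_6[of k] nonzero d by auto
  define D where "D = (\<lambda>i k. if i = k then d k else 0)"
  define D' where "D' = (\<lambda>i k. if i = k then 1 / d k else (0::complex))"
  have "linmap D' (linmap D v) = v" "linmap D (linmap D' v) = v" for v
    using d_nonzero by (simp_all add: D_def D'_def linmap_diagonal fun_eq_iff)
  moreover have "linmap D (K2_br a1 a2 u v) = K2_br b1 b2 (linmap D u) (linmap D v)" for u v
  proof
    fix k
    have "b1 * u 0 * v 0 + b2 * (u 1 * s * (v 2 * t) - u 2 * t * (v 1 * s))
          - u 3 * x * (v 2 * t) + u 4 * y * (v 1 * s)
        = b1 * (u 0 * v 0) + (b2 * s * t) * (u 1 * v 2 - u 2 * v 1)
          - (x * t) * (u 3 * v 2) + (y * s) * (u 4 * v 1)"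
      by (simp add: algebra_simps)
    also have "\<dots> = (a1 * u 0 * v 0 + a2 * (u 1 * v 2 - u 2 * v 1) - u 3 * v 2 + u 4 * v 1) * c"
      by (simp only: rel[symmetric]) (simp add: algebra_simps)
    finally show "linmap D (K2_br a1 a2 u v) k = K2_br b1 b2 (linmap D u) (linmap D v) k"
      using exhaust_6[of k] by (auto simp: D_def linmap_diagonal K2_br_coordinates d algebra_simps)
  qed
  ultimately show ?thesis
    unfolding K2_isomorphic_def fst_conv snd_conv by blast
qed

lemma K2_normal_form: "\<exists>b\<in>{(1,1),(1,0),(0,1),(0,0)}. K2_isomorphic (a1, a2) b"
proof (cases "a1 = 0"; cases "a2 = 0")
  assume "a1 = 0" "a2 = 0"
  then have "K2_isomorphic (a1, a2) (0, 0)" by (intro K2_isomorphic_rescale[of 1 1 1 1 1]) simp_all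
  then show ?thesis by blast
next
  assume "a1 = 0" "a2 \<noteq> 0"
  then have "K2_isomorphic (a1, a2) (0, 1)" by (intro K2_isomorphic_rescale[of a2 1 1 "1/a2" 1]) simp_all
  then show ?thesis by blast
next
  assume "a1 \<noteq> 0" "a2 = 0"
  then have "K2_isomorphic (a1, a2) (1, 0)"
    by (intro K2_isomorphic_rescale[of 1 1 "1/a1" "1/a1" "1/a1"]) simp_all
  then show ?thesis by blast
next
  assume "a1 \<noteq> 0" "a2 \<noteq> 0"
  then have "K2_isomorphic (a1, a2) (1, 1)"
    by (intro K2_isomorphic_rescale[of "a2/a1" 1 "1/a1" "1/a2" "1/a1"]) simp_all
  then show ?thesis by blast
qed

theorem mainTheorem5:
  shows "(\<forall>a1 a2. \<exists>b\<in>{(1,1),(1,0),(0,1),(0,0)}. K2_isomorphic (a1,a2) b) \<and>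
         (\<forall>b\<in>{(1,1),(1,0),(0,1),(0,0)}. \<forall>c\<in>{(1,1),(1,0),(0,1),(0,0)}.
             b \<noteq> c \<longrightarrow> \<not> K2_isomorphic b c)"
proof (intro conjI allI ballI impI)
  fix a1 a2 :: complex
  show "\<exists>b\<in>{(1,1),(1,0),(0,1),(0,0)}. K2_isomorphic (a1,a2) b"
    by (rule K2_normal_form)
next
  fix b c :: "complex \<times> complex"
  assume "b \<in> {(1,1),(1,0),(0,1),(0,0)}" "c \<in> {(1,1),(1,0),(0,1),(0,0)}" "b \<noteq> c"
  moreover have "K2_isomorphic b c \<Longrightarrow> (fst b = 0 \<longleftrightarrow> fst c = 0) \<and> (snd b = 0 \<longleftrightarrow> snd c = 0)"
    using K2_isomorphic_same_zero_pattern[of "fst b" "snd b" "fst c" "snd c"] by simp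
  ultimately show "\<not> K2_isomorphic b c" by auto
qed

end
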